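(* Consider the data-selling model described in the context, with network $G$ on $n$ buyers and cost $\gamma>0$. Suppose $G$ is not a disjoint union of complete graphs (this includes the case that $G$ is not complete). For $z_0>0$ define: - $z^o(z_0)=\sqrt{\alpha(G)/\gamma}-z_0$, the precision of the seller-optimal contract; - $z^*(z_0)$, the precision of the socially efficient contract, i.e. the positive solution $z$ of $$\sum_{i\in N}\frac{n_i+1}{(z_0+(n_i+1)z)^2}=\gamma.$$ Then there exists $\bar z>0$ such that $z^*(z_0)<z^o(z_0)$ for all $z_0\in(0,\bar z)$.
   Context: $N=\{1,\dots,n\}$ is the set of buyers and $G$ is an undirected simple network on $N$. $n_i$ denotes the degree (number of neighbors) of buyer $i$ in $G$. $\alpha(G)$ is the independence number of $G$, the largest size of a set of nodes no two of which are adjacent. A graph is a disjoint union of complete graphs if each of its connected components is a complete graph. Setting: the state is $\theta\sim N(0,1/z_0)$. A seller sells a common-precision signal $\theta+\varepsilon_i$, with $\varepsilon_i\sim N(0,1/z)$, to a target set of buyers at marginal cost $\gamma z$. Buyers share signals with their network neighbors and have quadratic loss $-(a_i-\theta)^2$. In this setting the seller-optimal precision is $z^o$ and the welfare-maximizing precision is $z^*$, as defined in the claim. *)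

theory Defs
  imports Complex_Main
begin

definition simple_graph :: "nat \<Rightarrow> (nat \<Rightarrow> nat \<Rightarrow> bool) \<Rightarrow> bool" where
  "simple_graph n E \<longleftrightarrow>
     (\<forall>i j. E i j \<longrightarrow> i \<in> {1..n} \<and> j \<in> {1..n}) \<and>
     (\<forall>i j. E i j \<longrightarrow> E j i) \<and> (\<forall>i. \<not> E i i)"

definition degree :: "nat \<Rightarrow> (nat \<Rightarrow> nat \<Rightarrow> bool) \<Rightarrow> nat \<Rightarrow> nat" where
  "degree n E i = card {j \<in> {1..n}. E i j}"

definition independent_set :: "nat \<Rightarrow> (nat \<Rightarrow> nat \<Rightarrow> bool) \<Rightarrow> nat set \<Rightarrow> bool" where
  "independent_set n E S \<longleftrightarrow> S \<subseteq> {1..n} \<and> (\<forall>i\<in>S. \<forall>j\<in>S. \<not> E i j)"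

definition independence_number :: "nat \<Rightarrow> (nat \<Rightarrow> nat \<Rightarrow> bool) \<Rightarrow> nat" where
  "independence_number n E = Max {card S | S. independent_set n E S}"

text \<open>Each connected component is complete iff adjacency is transitive on distinct vertices.\<close>
definition disjoint_union_of_cliques :: "nat \<Rightarrow> (nat \<Rightarrow> nat \<Rightarrow> bool) \<Rightarrow> bool" where
  "disjoint_union_of_cliques n E \<longleftrightarrow>
     (\<forall>i\<in>{1..n}. \<forall>j\<in>{1..n}. \<forall>k\<in>{1..n}. E i j \<and> E j k \<and> i \<noteq> k \<longrightarrow> E i k)"

definition z_seller :: "nat \<Rightarrow> (nat \<Rightarrow> nat \<Rightarrow> bool) \<Rightarrow> real \<Rightarrow> real \<Rightarrow> real" where
  "z_seller n E \<gamma> z0 = sqrt (real (independence_number n E) / \<gamma>) - z0"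

definition welfare_foc :: "nat \<Rightarrow> (nat \<Rightarrow> nat \<Rightarrow> bool) \<Rightarrow> real \<Rightarrow> real \<Rightarrow> real \<Rightarrow> bool" where
  "welfare_foc n E \<gamma> z0 z \<longleftrightarrow>
     (\<Sum>i\<in>{1..n}. (real (degree n E i) + 1) / (z0 + (real (degree n E i) + 1) * z)\<^sup>2) = \<gamma>"

definition z_welfare :: "nat \<Rightarrow> (nat \<Rightarrow> nat \<Rightarrow> bool) \<Rightarrow> real \<Rightarrow> real \<Rightarrow> real" where
  "z_welfare n E \<gamma> z0 = (THE z. z > 0 \<and> welfare_foc n E \<gamma> z0 z)"

end

(* Write c_i = n_i + 1 and S = \<Sum>_i 1/c_i. By the Caro-Wei inequality S \<le> \<alpha>(G), with equality
   only for disjoint unions of cliques: deleting a vertex v of minimum degree together with its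
   neighbours removes at most 1 from S while v joins the independent set, and equality forces that
   closed neighbourhood to be a clique component. On the welfare side every summand
   c_i/(z0 + c_i z)^2 of the first-order condition is below 1/(c_i z^2), so the root satisfies
   z* < sqrt(S/\<gamma>), whereas z^o = sqrt(\<alpha>/\<gamma>) - z0 exceeds sqrt(S/\<gamma>) once z0 is small. *)

theory Submission
  imports Defs
begin

definition degree_on :: "('a \<Rightarrow> 'a \<Rightarrow> bool) \<Rightarrow> 'a set \<Rightarrow> 'a \<Rightarrow> nat" where
  "degree_on E V u = card {w \<in> V. E u w}"

definition caro_wei_bound :: "('a \<Rightarrow> 'a \<Rightarrow> bool) \<Rightarrow> 'a set \<Rightarrow> real" where
  "caro_wei_bound E V = (\<Sum>u\<in>V. 1 / (real (degree_on E V u) + 1))"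

definition union_of_cliques_on :: "('a \<Rightarrow> 'a \<Rightarrow> bool) \<Rightarrow> 'a set \<Rightarrow> bool" where
  "union_of_cliques_on E V \<longleftrightarrow>
     (\<forall>i\<in>V. \<forall>j\<in>V. \<forall>k\<in>V. E i j \<and> E j k \<and> i \<noteq> k \<longrightarrow> E i k)"

lemma sum_inverse_Suc_le_one:
  fixes k :: "'a \<Rightarrow> nat"
  assumes "finite A" and "\<And>a. a \<in> A \<Longrightarrow> card A \<le> k a + 1"
  shows "(\<Sum>a\<in>A. 1 / (real (k a) + 1)) \<le> 1"
    and "(\<Sum>a\<in>A. 1 / (real (k a) + 1)) = 1 \<Longrightarrow> a \<in> A \<Longrightarrow> k a + 1 = card A"
proof -
  have le: "1 / (real (k a) + 1) \<le> 1 / real (card A)" if "a \<in> A" for a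
  proof (rule frac_le)
    show "0 < real (card A)"
      using that \<open>finite A\<close> card_gt_0_iff by auto
    show "real (card A) \<le> real (k a) + 1"
      using assms(2)[OF that] by linarith
  qed simp_all
  have const: "(\<Sum>a\<in>A. 1 / real (card A)) \<le> 1"
    by (cases "A = {}") simp_all
  have "(\<Sum>a\<in>A. 1 / (real (k a) + 1)) \<le> (\<Sum>a\<in>A. 1 / real (card A))"
    by (rule sum_mono) (rule le)
  with const show "(\<Sum>a\<in>A. 1 / (real (k a) + 1)) \<le> 1"
    by linarith
  assume sum_eq: "(\<Sum>a\<in>A. 1 / (real (k a) + 1)) = 1" and a: "a \<in> A"
  show "k a + 1 = card A"
  proof (rule ccontr)
    assume "k a + 1 \<noteq> card A"
    with assms(2)[OF a] have "real (card A) < real (k a) + 1"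
      by linarith
    moreover have "0 < real (card A)"
      using a \<open>finite A\<close> card_gt_0_iff by auto
    ultimately have "1 / (real (k a) + 1) < 1 / real (card A)"
      by (metis frac_less2 order_refl zero_less_one)
    then have "(\<Sum>a\<in>A. 1 / (real (k a) + 1)) < (\<Sum>a\<in>A. 1 / real (card A))"
      using le a \<open>finite A\<close> by (intro sum_strict_mono_ex1) auto
    with sum_eq const show False by linarith
  qed
qed

lemma caro_wei_bound_subset:
  assumes "finite V" and "V' \<subseteq> V"
  shows "(\<Sum>u\<in>V'. 1 / (real (degree_on E V u) + 1)) \<le> caro_wei_bound E V'"
    and "(\<Sum>u\<in>V'. 1 / (real (degree_on E V u) + 1)) = caro_wei_bound E V' \<Longrightarrow>
           u \<in> V' \<Longrightarrow> w \<in> V - V' \<Longrightarrow> \<not> E u w"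
proof -
  have fin: "finite {w \<in> V. E u w}" for u
    using \<open>finite V\<close> by simp
  have deg_le: "degree_on E V' u \<le> degree_on E V u" for u
    unfolding degree_on_def using assms by (intro card_mono fin) auto
  have le: "1 / (real (degree_on E V u) + 1) \<le> 1 / (real (degree_on E V' u) + 1)" for u
    using deg_le[of u] by (simp add: frac_le)
  show "(\<Sum>u\<in>V'. 1 / (real (degree_on E V u) + 1)) \<le> caro_wei_bound E V'"
    unfolding caro_wei_bound_def by (rule sum_mono) (rule le)
  assume sum_eq: "(\<Sum>u\<in>V'. 1 / (real (degree_on E V u) + 1)) = caro_wei_bound E V'"
    and u: "u \<in> V'" and w: "w \<in> V - V'"
  show "\<not> E u w"
  proof
    assume "E u w"
    with w assms(2) have "{w \<in> V'. E u w} \<subset> {w \<in> V. E u w}"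
      by blast
    then have "degree_on E V' u < degree_on E V u"
      unfolding degree_on_def by (intro psubset_card_mono fin)
    then have "1 / (real (degree_on E V u) + 1) < 1 / (real (degree_on E V' u) + 1)"
      by (simp add: frac_less2)
    then have "(\<Sum>u\<in>V'. 1 / (real (degree_on E V u) + 1)) < caro_wei_bound E V'"
      unfolding caro_wei_bound_def
      using le u assms finite_subset by (intro sum_strict_mono_ex1) auto
    with sum_eq show False by simp
  qed
qed

lemma union_of_cliques_on_add_component:
  assumes "finite V" and sym: "\<And>u w. E u w \<Longrightarrow> E w u" and irrefl: "\<And>u. \<not> E u u"
    and "N \<subseteq> V" and cliques: "union_of_cliques_on E (V - N)"
    and regular: "\<And>u. u \<in> N \<Longrightarrow> degree_on E V u + 1 = card N"
    and separated: "\<And>u w. u \<in> V - N \<Longrightarrow> w \<in> N \<Longrightarrow> \<not> E u w"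
  shows "union_of_cliques_on E V"
proof -
  have "finite N"
    using \<open>finite V\<close> \<open>N \<subseteq> V\<close> by (rule finite_subset[rotated])
  have component: "{w \<in> V. E u w} = N - {u}" if "u \<in> N" for u
  proof (rule card_subset_eq)
    show "{w \<in> V. E u w} \<subseteq> N - {u}"
      using separated sym irrefl that by fastforce
    show "card {w \<in> V. E u w} = card (N - {u})"
      using regular[OF that] that \<open>finite N\<close> by (simp add: degree_on_def)
  qed (use \<open>finite N\<close> in simp)
  show ?thesis
    unfolding union_of_cliques_on_def
  proof (intro ballI impI)
    fix i j k
    assume "i \<in> V" "j \<in> V" "k \<in> V" and ijk: "E i j \<and> E j k \<and> i \<noteq> k"
    show "E i k"
    proof (cases "j \<in> N")
      case True
      then have "i \<in> N" "k \<in> N"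
        using component[OF True] \<open>i \<in> V\<close> \<open>k \<in> V\<close> ijk sym by blast+
      then show ?thesis
        using component[OF \<open>i \<in> N\<close>] \<open>k \<in> V\<close> ijk by blast
    next
      case False
      then have "i \<notin> N" "k \<notin> N"
        using component \<open>j \<in> V\<close> ijk sym by blast+
      then show ?thesis
        using cliques \<open>i \<in> V\<close> \<open>j \<in> V\<close> \<open>k \<in> V\<close> \<open>j \<notin> N\<close> ijk
        unfolding union_of_cliques_on_def by blast
    qed
  qed
qed

lemma caro_wei_bound_delete_min_degree:
  assumes "finite V" and sym: "\<And>u w. E u w \<Longrightarrow> E w u" and irrefl: "\<And>u. \<not> E u u"
    and "v \<in> V" and v_min: "\<And>u. u \<in> V \<Longrightarrow> degree_on E V v \<le> degree_on E V u"
  defines "N \<equiv> insert v {w \<in> V. E v w}"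
  shows "caro_wei_bound E V \<le> 1 + caro_wei_bound E (V - N)"
    and "caro_wei_bound E V = 1 + caro_wei_bound E (V - N) \<Longrightarrow>
           union_of_cliques_on E (V - N) \<Longrightarrow> union_of_cliques_on E V"
proof -
  let ?w = "\<lambda>u. 1 / (real (degree_on E V u) + 1)"
  have "N \<subseteq> V" "finite N"
    using \<open>v \<in> V\<close> \<open>finite V\<close> by (auto simp: N_def)
  have card_N: "card N = degree_on E V v + 1"
    using \<open>finite V\<close> irrefl by (simp add: N_def degree_on_def)
  have split: "caro_wei_bound E V = sum ?w N + sum ?w (V - N)"
    unfolding caro_wei_bound_def
    using sum.subset_diff[OF \<open>N \<subseteq> V\<close> \<open>finite V\<close>, of ?w] by linarith
  have N_le: "sum ?w N \<le> 1"
    using sum_inverse_Suc_le_one(1)[OF \<open>finite N\<close>] card_N v_min \<open>N \<subseteq> V\<close> by auto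
  have rest_le: "sum ?w (V - N) \<le> caro_wei_bound E (V - N)"
    using caro_wei_bound_subset(1)[OF \<open>finite V\<close>] by simp
  show "caro_wei_bound E V \<le> 1 + caro_wei_bound E (V - N)"
    using split N_le rest_le by simp
  assume "caro_wei_bound E V = 1 + caro_wei_bound E (V - N)"
  then have sum_N: "sum ?w N = 1" and sum_rest: "sum ?w (V - N) = caro_wei_bound E (V - N)"
    using split N_le rest_le by linarith+
  assume cliques_rest: "union_of_cliques_on E (V - N)"
  show "union_of_cliques_on E V"
  proof (rule union_of_cliques_on_add_component[OF \<open>finite V\<close> sym irrefl \<open>N \<subseteq> V\<close> cliques_rest])
    show "degree_on E V u + 1 = card N" if "u \<in> N" for u
      using sum_inverse_Suc_le_one(2)[OF \<open>finite N\<close> _ sum_N that] card_N v_min \<open>N \<subseteq> V\<close>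
      by auto
    show "\<not> E u w" if "u \<in> V - N" "w \<in> N" for u w
      using caro_wei_bound_subset(2)[OF \<open>finite V\<close> _ sum_rest] that \<open>N \<subseteq> V\<close> by auto
  qed
qed

lemma caro_wei_independent_set:
  assumes "finite V" and sym: "\<And>u w. E u w \<Longrightarrow> E w u" and irrefl: "\<And>u. \<not> E u u"
  shows "\<exists>I\<subseteq>V. (\<forall>i\<in>I. \<forall>j\<in>I. \<not> E i j) \<and> caro_wei_bound E V \<le> card I \<and>
           (caro_wei_bound E V = card I \<longrightarrow> union_of_cliques_on E V)"
  using assms(1)
proof (induction V rule: finite_psubset_induct)
  case (psubset V)
  show ?case
  proof (cases "V = {}")
    case True
    then show ?thesis
      by (auto simp: caro_wei_bound_def union_of_cliques_on_def)
  next
    case False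
    obtain v where "v \<in> V" and v_min: "\<And>u. u \<in> V \<Longrightarrow> degree_on E V v \<le> degree_on E V u"
      using psubset.hyps False by (metis arg_min_if_finite(1,2) not_less)
    define N where "N = insert v {w \<in> V. E v w}"
    note delete = caro_wei_bound_delete_min_degree[OF psubset.hyps sym irrefl \<open>v \<in> V\<close> v_min,
        folded N_def]
    obtain I' where "I' \<subseteq> V - N" and indep': "\<forall>i\<in>I'. \<forall>j\<in>I'. \<not> E i j"
      and bound': "caro_wei_bound E (V - N) \<le> card I'"
      and eq': "caro_wei_bound E (V - N) = card I' \<longrightarrow> union_of_cliques_on E (V - N)"
      using psubset.IH[of "V - N"] \<open>v \<in> V\<close> by (auto simp: N_def)
    define I where "I = insert v I'"
    have "v \<notin> I'" "finite I'"
      using \<open>I' \<subseteq> V - N\<close> psubset.hyps finite_subset by (auto simp: N_def)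
    then have card_I: "card I = card I' + 1"
      by (simp add: I_def)
    have "I \<subseteq> V"
      using \<open>I' \<subseteq> V - N\<close> \<open>v \<in> V\<close> by (auto simp: I_def)
    moreover have "\<forall>i\<in>I. \<forall>j\<in>I. \<not> E i j"
      using indep' \<open>I' \<subseteq> V - N\<close> irrefl sym by (auto simp: I_def N_def)
    moreover have "caro_wei_bound E V \<le> card I"
      using delete(1) bound' card_I by simp
    moreover have "union_of_cliques_on E V" if "caro_wei_bound E V = card I"
      using that delete bound' eq' card_I by simp
    ultimately show ?thesis
      by blast
  qed
qed

definition marginal_welfare :: "('a \<Rightarrow> real) \<Rightarrow> 'a set \<Rightarrow> real \<Rightarrow> real \<Rightarrow> real" where
  "marginal_welfare c A z0 z = (\<Sum>i\<in>A. c i / (z0 + c i * z)\<^sup>2)"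

lemma marginal_welfare_strict_antimono:
  assumes "finite A" "A \<noteq> {}" "\<And>i. i \<in> A \<Longrightarrow> 0 < c i" "0 < z0" "0 \<le> x" "x < y"
  shows "marginal_welfare c A z0 y < marginal_welfare c A z0 x"
  unfolding marginal_welfare_def
proof (rule sum_strict_mono[OF assms(1,2)])
  fix i assume "i \<in> A"
  then have "0 < c i"
    by (rule assms(3))
  then have "0 < z0 + c i * x" "z0 + c i * x < z0 + c i * y"
    using assms(4-6) by (simp_all add: add_pos_nonneg)
  then have "(z0 + c i * x)\<^sup>2 < (z0 + c i * y)\<^sup>2"
    by (simp add: power_strict_mono)
  moreover have "0 < (z0 + c i * x)\<^sup>2"
    using \<open>0 < z0 + c i * x\<close> by simp
  ultimately show "c i / (z0 + c i * y)\<^sup>2 < c i / (z0 + c i * x)\<^sup>2"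
    using \<open>0 < c i\<close> by (intro divide_strict_left_mono mult_pos_pos) auto
qed

lemma marginal_welfare_less:
  assumes "finite A" "A \<noteq> {}" "\<And>i. i \<in> A \<Longrightarrow> 0 < c i" "0 < z0" "0 < z"
  shows "marginal_welfare c A z0 z < (\<Sum>i\<in>A. 1 / c i) / z\<^sup>2"
  unfolding marginal_welfare_def sum_divide_distrib
proof (rule sum_strict_mono[OF assms(1,2)])
  fix i assume "i \<in> A"
  then have "0 < c i"
    by (rule assms(3))
  then have "(c i * z)\<^sup>2 < (z0 + c i * z)\<^sup>2"
    using assms(4,5) by (simp add: power_strict_mono)
  then have "c i / (z0 + c i * z)\<^sup>2 < c i / (c i * z)\<^sup>2"
    using \<open>0 < c i\<close> assms(5) by (intro divide_strict_left_mono mult_pos_pos) auto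
  also have "\<dots> = 1 / c i / z\<^sup>2"
    using \<open>0 < c i\<close> by (simp add: power2_eq_square)
  finally show "c i / (z0 + c i * z)\<^sup>2 < 1 / c i / z\<^sup>2" .
qed

lemma marginal_welfare_zero_ge:
  assumes "\<And>i. i \<in> A \<Longrightarrow> 1 \<le> c i"
  shows "(\<Sum>i\<in>A. 1 / c i) / z0\<^sup>2 \<le> marginal_welfare c A z0 0"
  unfolding marginal_welfare_def sum_divide_distrib
proof (rule sum_mono)
  fix i assume "i \<in> A"
  then have c1: "1 \<le> c i"
    by (rule assms)
  then have "1 / c i \<le> c i"
    using mult_mono[OF c1 c1] by (simp add: divide_le_eq)
  then show "1 / c i / z0\<^sup>2 \<le> c i / (z0 + c i * 0)\<^sup>2"
    by (simp add: divide_right_mono del: divide_divide_eq_left)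
qed

lemma marginal_welfare_root_less:
  fixes c :: "'a \<Rightarrow> real" and A :: "'a set" and \<gamma> :: real
  defines "S \<equiv> \<Sum>i\<in>A. 1 / c i"
  assumes "finite A" "A \<noteq> {}" "\<And>i. i \<in> A \<Longrightarrow> 1 \<le> c i"
    and "0 < \<gamma>" "0 < z0" "z0 < sqrt (S / \<gamma>)"
  shows "(THE z. 0 < z \<and> marginal_welfare c A z0 z = \<gamma>) < sqrt (S / \<gamma>)"
proof -
  let ?f = "marginal_welfare c A z0"
  define B where "B = sqrt (S / \<gamma>)"
  have c_pos: "\<And>i. i \<in> A \<Longrightarrow> 0 < c i"
    using assms(4) by (meson less_le_trans zero_less_one)
  have "0 < S"
    unfolding S_def using assms(2,3) c_pos by (intro sum_pos) auto
  then have "0 < B" and B2: "B\<^sup>2 = S / \<gamma>"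
    using \<open>0 < \<gamma>\<close> by (simp_all add: B_def)
  have "\<gamma> < S / z0\<^sup>2"
  proof -
    have "z0\<^sup>2 < B\<^sup>2"
      using assms(6,7) by (simp add: B_def power_strict_mono)
    with B2 have "z0\<^sup>2 < S / \<gamma>"
      by simp
    with \<open>0 < \<gamma>\<close> \<open>0 < z0\<close> show ?thesis
      by (simp add: field_simps)
  qed
  also have "S / z0\<^sup>2 \<le> ?f 0"
    unfolding S_def by (rule marginal_welfare_zero_ge) (rule assms(4))
  finally have "\<gamma> < ?f 0" .
  have "?f B < \<gamma>"
    using marginal_welfare_less[of A c z0 B, OF assms(2,3) c_pos \<open>0 < z0\<close> \<open>0 < B\<close>] B2 \<open>0 < S\<close>
    by (simp add: S_def)
  have "continuous_on {0..B} ?f"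
    unfolding marginal_welfare_def
    using c_pos \<open>0 < z0\<close>
    by (intro continuous_intros) (metis add_pos_nonneg atLeastAtMost_iff less_imp_le
        mult_nonneg_nonneg power_not_zero less_irrefl)
  then obtain x where "0 \<le> x" "x \<le> B" "?f x = \<gamma>"
    using IVT2'[of ?f B \<gamma> 0] \<open>?f B < \<gamma>\<close> \<open>\<gamma> < ?f 0\<close> \<open>0 < B\<close> by auto
  have root: "0 < x \<and> ?f x = \<gamma>"
    using \<open>0 \<le> x\<close> \<open>?f x = \<gamma>\<close> \<open>\<gamma> < ?f 0\<close> by (cases "x = 0") auto
  have "y = x" if "0 < y \<and> ?f y = \<gamma>" for y
    using marginal_welfare_strict_antimono[of A c z0 x y, OF assms(2,3) c_pos \<open>0 < z0\<close>]
      marginal_welfare_strict_antimono[of A c z0 y x, OF assms(2,3) c_pos \<open>0 < z0\<close>] root that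
    by (cases x y rule: linorder_cases) auto
  then have "(THE z. 0 < z \<and> ?f z = \<gamma>) = x"
    using root by (rule the_equality[rotated])
  moreover have "x \<noteq> B"
    using \<open>?f x = \<gamma>\<close> \<open>?f B < \<gamma>\<close> by auto
  ultimately show ?thesis
    using \<open>x \<le> B\<close> by (simp add: B_def)
qed
lemma card_le_independence_number:
  assumes "I \<subseteq> {1..n}" and "\<forall>i\<in>I. \<forall>j\<in>I. \<not> E i j"
  shows "card I \<le> independence_number n E"
proof -
  have "{card S | S. independent_set n E S} \<subseteq> card ` Pow {1..n}"
    unfolding independent_set_def by auto
  then have "finite {card S | S. independent_set n E S}"
    by (rule finite_subset) simp
  moreover have "card I \<in> {card S | S. independent_set n E S}"
    using assms unfolding independent_set_def by blast
  ultimately show ?thesis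
    unfolding independence_number_def by (rule Max_ge)
qed

theorem theorem2:
  fixes n :: nat and E :: "nat \<Rightarrow> nat \<Rightarrow> bool" and \<gamma> :: real
  assumes "simple_graph n E"
    and "\<not> disjoint_union_of_cliques n E"
    and "\<gamma> > 0"
  shows "\<exists>zbar > 0. \<forall>z0. 0 < z0 \<and> z0 < zbar \<longrightarrow>
           z_welfare n E \<gamma> z0 < z_seller n E \<gamma> z0"
proof -
  define c where "c i = real (degree n E i) + 1" for i
  define S where "S = (\<Sum>i\<in>{1..n}. 1 / c i)"
  define \<alpha> where "\<alpha> = real (independence_number n E)"
  have not_cliques: "\<not> union_of_cliques_on E {1..n}"
    using assms(2) by (simp add: union_of_cliques_on_def disjoint_union_of_cliques_def)
  then have "{1..n} \<noteq> {}"
    by (auto simp: union_of_cliques_on_def)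
  have "S = caro_wei_bound E {1..n}"
    by (simp add: S_def c_def caro_wei_bound_def degree_on_def degree_def)
  with caro_wei_independent_set[of "{1..n}" E] not_cliques assms(1) obtain I where "I \<subseteq> {1..n}"
    and "\<forall>i\<in>I. \<forall>j\<in>I. \<not> E i j" and "S < card I"
    by (force simp: simple_graph_def)
  then have "S < \<alpha>"
    using card_le_independence_number[of I n E] by (simp add: \<alpha>_def)
  have "0 < S"
    unfolding S_def c_def using \<open>{1..n} \<noteq> {}\<close> by (intro sum_pos) auto
  have z_welfare: "z_welfare n E \<gamma> z0 = (THE z. 0 < z \<and> marginal_welfare c {1..n} z0 z = \<gamma>)"
    for z0
    by (simp add: z_welfare_def welfare_foc_def marginal_welfare_def c_def conj_commute)
  show ?thesis
  proof (intro exI[of _ "min (sqrt (\<alpha> / \<gamma>) - sqrt (S / \<gamma>)) (sqrt (S / \<gamma>))"] conjI allI impI)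
    show "0 < min (sqrt (\<alpha> / \<gamma>) - sqrt (S / \<gamma>)) (sqrt (S / \<gamma>))"
      using \<open>0 < S\<close> \<open>S < \<alpha>\<close> assms(3) by (simp add: divide_strict_right_mono)
    fix z0 assume z0: "0 < z0 \<and> z0 < min (sqrt (\<alpha> / \<gamma>) - sqrt (S / \<gamma>)) (sqrt (S / \<gamma>))"
    have "z_welfare n E \<gamma> z0 < sqrt (S / \<gamma>)"
      unfolding z_welfare S_def
      using z0 assms(3) \<open>{1..n} \<noteq> {}\<close>
      by (intro marginal_welfare_root_less) (auto simp: S_def c_def)
    also have "\<dots> < z_seller n E \<gamma> z0"
      using z0 by (simp add: z_seller_def \<alpha>_def)
    finally show "z_welfare n E \<gamma> z0 < z_seller n E \<gamma> z0" .
  qed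
qed

end
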